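(* Let $\mathbf{u}=(u_1,u_2)$ be a pair of real binary forms of degree $d$, and let $g,h,u_1',u_2'$ be real binary forms with $(u_1,u_2)=(u_1'gh,u_2'gh)$, $\gcd(u_1,u_2)=gh$, $\gcd(u_1',u_2')=1$, $\gcd(u_1'^2+u_2'^2,g)=1$, and such that every (possibly complex) root of $h$ is a root of $u_1'^2+u_2'^2$. Then both $u_1'^2+u_2'^2$ and $h$ have no real roots, and $\deg(h)$ is even.
   Context: A real binary form is a homogeneous polynomial in two variables $x_1,x_2$ with real coefficients. A root of a binary form $q$ is a nonzero point $(a,b)\in\mathbb{C}^2$ (up to scaling) with $q(a,b)=0$; a real root is one with $(a,b)\in\mathbb{R}^2\setminus\{0\}$. $\gcd$ of binary forms is the common divisor of highest degree (unique up to scalar); $\gcd=1$ means coprime. *)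

theory Defs
  imports "HOL-Computational_Algebra.Computational_Algebra"
begin

text \<open>A real binary form in x1, x2 is represented as a bivariate polynomial of type
  real poly poly: the outer variable is x2, the coefficients are polynomials in x1.
  The monomial x1^j x2^i has coefficient coeff (coeff q i) j.\<close>

definition is_bform :: "real poly poly \<Rightarrow> nat \<Rightarrow> bool" where
  "is_bform q d \<longleftrightarrow> (\<forall>i j. coeff (coeff q i) j \<noteq> 0 \<longrightarrow> i + j = d)"

definition is_binary_form :: "real poly poly \<Rightarrow> bool" where
  "is_binary_form q \<longleftrightarrow> (\<exists>d. is_bform q d)"

definition bf_degree :: "real poly poly \<Rightarrow> nat" where
  "bf_degree q = Max ({i + j | i j. coeff (coeff q i) j \<noteq> 0} \<union> {0})"

definition bf_eval :: "real poly poly \<Rightarrow> complex \<Rightarrow> complex \<Rightarrow> complex" where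
  "bf_eval q a b = poly (map_poly (\<lambda>c. poly (map_poly of_real c) a) q) b"

definition bf_root :: "real poly poly \<Rightarrow> complex \<Rightarrow> complex \<Rightarrow> bool" where
  "bf_root q a b \<longleftrightarrow> (a, b) \<noteq> (0, 0) \<and> bf_eval q a b = 0"

definition bf_has_real_root :: "real poly poly \<Rightarrow> bool" where
  "bf_has_real_root q \<longleftrightarrow> (\<exists>a b :: real. bf_root q (of_real a) (of_real b))"

definition is_gcd_of :: "real poly poly \<Rightarrow> real poly poly \<Rightarrow> real poly poly \<Rightarrow> bool" where
  "is_gcd_of f a b \<longleftrightarrow> f dvd a \<and> f dvd b \<and> (\<forall>c. c dvd a \<longrightarrow> c dvd b \<longrightarrow> c dvd f)"

end

theory Submission
  imports Defs
begin

text \<open>A real zero (a, b) of u1'^2 + u2'^2 is a common zero of u1' and u2'; by homogeneity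
  both then vanish on the whole line through (a, b), so the linear form cutting out that line
  divides both, contradicting coprimality. Every real root of h would be such a zero, so h has
  no real roots either. Finally, a form h of odd degree changes sign under (x, y) \<mapsto> (-x, -y),
  so by the intermediate value theorem it vanishes somewhere on the unit circle.\<close>

definition bf_eval_real :: "real poly poly \<Rightarrow> real \<Rightarrow> real \<Rightarrow> real" where
  "bf_eval_real q x y = poly (poly q [:y:]) x"

lemma bf_eval_real_add [simp]: "bf_eval_real (p + q) x y = bf_eval_real p x y + bf_eval_real q x y"
  by (simp add: bf_eval_real_def)

lemma bf_eval_real_power [simp]: "bf_eval_real (p ^ n) x y = bf_eval_real p x y ^ n"
  by (simp add: bf_eval_real_def poly_power)

lemma poly_poly_eq_poly_map_poly:
  "poly (poly q p) x = poly (map_poly (\<lambda>c. poly c x) q) (poly p x)"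
  by (induction q) (simp_all add: map_poly_pCons)

lemma bf_eval_real_eq_poly_map_poly:
  "bf_eval_real q x y = poly (map_poly (\<lambda>c. poly c x) q) y"
  by (simp add: bf_eval_real_def poly_poly_eq_poly_map_poly)

lemma bf_eval_real_eq_sum:
  "bf_eval_real q x y =
     (\<Sum>i\<le>degree q. \<Sum>j\<le>degree (coeff q i). coeff (coeff q i) j * x ^ j * y ^ i)"
  by (simp add: bf_eval_real_def poly_altdef[of q] poly_sum poly_altdef[of "coeff q _"]
      poly_power sum_distrib_right)

lemma bf_eval_of_real: "bf_eval q (of_real x) (of_real y) = of_real (bf_eval_real q x y)"
proof -
  have "poly (map_poly of_real c) (of_real x) = (of_real (poly c x) :: complex)" for c
    by (induction c) (auto simp: map_poly_pCons)
  then show ?thesis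
    by (induction q) (auto simp: bf_eval_def bf_eval_real_def map_poly_pCons)
qed

lemma bf_has_real_root_iff:
  "bf_has_real_root q \<longleftrightarrow> (\<exists>a b. (a, b) \<noteq> (0, 0) \<and> bf_eval_real q a b = 0)"
  by (simp add: bf_has_real_root_def bf_root_def bf_eval_of_real)

lemma bf_eval_real_homogeneous:
  assumes "is_bform q k"
  shows "bf_eval_real q (t * x) (t * y) = t ^ k * bf_eval_real q x y"
proof -
  have "coeff (coeff q i) j * (t * x) ^ j * (t * y) ^ i = t ^ k * (coeff (coeff q i) j * x ^ j * y ^ i)"
    for i j
  proof (cases "coeff (coeff q i) j = 0")
    case False
    with assms have "i + j = k" by (auto simp: is_bform_def)
    then show ?thesis by (auto simp: power_mult_distrib power_add algebra_simps)
  qed simp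
  then show ?thesis
    unfolding bf_eval_real_eq_sum sum_distrib_left by (intro sum.cong refl) (simp add: mult.assoc)
qed

text \<open>Up to a scalar, the linear form b x1 - a x2 vanishing on the line through (a, b).\<close>
definition root_line :: "real \<Rightarrow> real \<Rightarrow> real poly poly" where
  "root_line a b = (if a = 0 then [:[:0, 1:]:] else [:[:0, - (b / a):], 1:])"

lemma root_line_not_unit: "\<not> is_unit (root_line a b)"
  by (auto simp: root_line_def is_unit_poly_iff)

lemma root_line_dvd:
  assumes q: "is_bform q k" and ab: "(a, b) \<noteq> (0, 0)" and zero: "bf_eval_real q a b = 0"
  shows "root_line a b dvd q"
proof (cases "a = 0")
  case True
  with ab have "b \<noteq> 0" by auto
  have "bf_eval_real q 0 y = 0" for y
    using bf_eval_real_homogeneous[OF q, of "y / b" 0 b] zero True \<open>b \<noteq> 0\<close> by simp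
  then have "map_poly (\<lambda>c. poly c 0) q = 0"
    using poly_all_0_iff_0 by (metis bf_eval_real_eq_poly_map_poly)
  then have "poly (coeff q i) 0 = 0" for i
    by (metis coeff_0 coeff_map_poly poly_0)
  then have "[:0, 1:] dvd coeff q i" for i
    by (simp add: dvd_iff_poly_eq_0)
  with True show ?thesis
    by (simp add: root_line_def const_poly_dvd_iff)
next
  case False
  define c where "c = b / a"
  have "bf_eval_real q 1 c = 0"
    using bf_eval_real_homogeneous[OF q, of "1 / a" a b] zero False by (simp add: c_def)
  then have "poly (poly q [:0, c:]) x = 0" for x
    using bf_eval_real_homogeneous[OF q, of x 1 c]
    by (simp add: poly_poly_eq_poly_map_poly bf_eval_real_eq_poly_map_poly mult.commute)
  then have "poly q [:0, c:] = 0"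
    using poly_all_0_iff_0 by blast
  with False show ?thesis
    by (simp add: root_line_def c_def poly_eq_0_iff_dvd)
qed

lemma sum_squares_no_real_root:
  assumes "is_binary_form u" "is_binary_form v" "coprime u v"
  shows "\<not> bf_has_real_root (u\<^sup>2 + v\<^sup>2)"
proof
  assume "bf_has_real_root (u\<^sup>2 + v\<^sup>2)"
  then obtain a b where ab: "(a, b) \<noteq> (0, 0)" and "bf_eval_real (u\<^sup>2 + v\<^sup>2) a b = 0"
    by (auto simp: bf_has_real_root_iff)
  then have "bf_eval_real u a b = 0" "bf_eval_real v a b = 0"
    by (simp_all add: sum_power2_eq_zero_iff)
  moreover obtain ku kv where "is_bform u ku" "is_bform v kv"
    using assms(1,2) by (auto simp: is_binary_form_def)
  ultimately have "root_line a b dvd u" "root_line a b dvd v"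
    using root_line_dvd ab by blast+
  with assms(3) root_line_not_unit show False
    using coprime_common_divisor by blast
qed

lemma odd_degree_has_real_root:
  assumes h: "is_bform h k" and "odd k"
  shows "bf_has_real_root h"
proof -
  define F where "F t = bf_eval_real h (cos t) (sin t)" for t
  have "F pi = - F 0"
    using bf_eval_real_homogeneous[OF h, of "-1" 1 0] \<open>odd k\<close> by (simp add: F_def)
  moreover have "isCont F t" for t
    unfolding F_def bf_eval_real_eq_sum by (intro continuous_intros)
  ultimately obtain t where "F t = 0"
    using IVT[of F 0 0 pi] IVT2[of F pi 0 0] by force
  moreover have "(cos t, sin t) \<noteq> (0, 0)"
    by (metis Pair_inject sin_cos_squared_add zero_neq_one power_zero_numeral add_0)
  ultimately show ?thesis
    by (auto simp: bf_has_real_root_iff F_def)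
qed

lemma bf_degree_eq:
  assumes "is_bform h k" "h \<noteq> 0"
  shows "bf_degree h = k"
proof -
  obtain i where i: "coeff h i \<noteq> 0"
    using assms(2) by (metis leading_coeff_0_iff)
  then obtain j where "coeff (coeff h i) j \<noteq> 0"
    by (metis leading_coeff_0_iff)
  with assms(1) i have "{i + j | i j. coeff (coeff h i) j \<noteq> 0} = {k}"
    by (auto simp: is_bform_def)
  then show ?thesis
    by (simp add: bf_degree_def)
qed

lemma even_bf_degree_if_no_real_root:
  assumes "is_binary_form h" "\<not> bf_has_real_root h"
  shows "even (bf_degree h)"
proof -
  obtain k where k: "is_bform h k"
    using assms(1) by (auto simp: is_binary_form_def)
  with assms(2) have "even k"
    using odd_degree_has_real_root by blast
  with k show ?thesis
    by (cases "h = 0") (simp add: bf_degree_def, simp add: bf_degree_eq)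
qed

theorem proposition3p6:
  fixes u1 u2 g h u1' u2' :: "real poly poly" and d :: nat
  assumes "is_bform u1 d" and "is_bform u2 d"
    and "is_binary_form g" and "is_binary_form h"
    and "is_binary_form u1'" and "is_binary_form u2'"
    and "u1 = u1' * g * h" and "u2 = u2' * g * h"
    and "is_gcd_of (g * h) u1 u2"
    and "coprime u1' u2'"
    and "coprime (u1'^2 + u2'^2) g"
    and "\<forall>a b. bf_root h a b \<longrightarrow> bf_root (u1'^2 + u2'^2) a b"
  shows "\<not> bf_has_real_root (u1'^2 + u2'^2) \<and> \<not> bf_has_real_root h \<and> even (bf_degree h)"
proof -
  have sos: "\<not> bf_has_real_root (u1'^2 + u2'^2)"
    using sum_squares_no_real_root assms(5,6,10) by blast
  with assms(12) have h: "\<not> bf_has_real_root h"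
    by (auto simp: bf_has_real_root_def)
  with assms(4) have "even (bf_degree h)"
    by (rule even_bf_degree_if_no_real_root)
  with sos h show ?thesis
    by blast
qed

end
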